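(* Let $N\ge 2$ vehicles, with positions $x_1(t),\dots,x_N(t)$, travel without overtaking on a ring road of length $L>0$; vehicle $N$ is the platoon leader, and vehicle $1$ is the vehicle directly ahead of the leader around the ring, at distance $x_1+L-x_N$. Let $a>0$, and let $V$ be an optimal velocity function, differentiable at $h=L/N$ with $V'(h)>0$. Suppose the dynamics are $$\ddot{x}_i(t)=a\left[V\!\left(\frac{x_N(t)-x_i(t)}{N-i}\right)-\dot{x}_i(t)\right],\qquad i=1,\dots,N-1,$$ $$\ddot{x}_N(t)=a\left[V\big(x_1(t)+L-x_N(t)\big)-\dot{x}_N(t)\right].$$ Then this system is linearly stable about the uniform-flow equilibrium $e_i(t)=hi+V(h)t$ for every $a>0$. No condition on $a$ beyond positivity is needed.
   Context: Write $x_i(t)=e_i(t)+y_i(t)$ and linearize the system in the small perturbations $y_i$. The system is called linearly stable if every characteristic root $\lambda$ of this linearized system, i.e. every $\lambda$ admitting a solution of the form $y_i(t)=\xi_i e^{\lambda t}$ with $(\xi_1,\dots,\xi_N)\neq 0$, satisfies $\operatorname{Re}\lambda<0$. The single exception is the root $\lambda=0$, which corresponds to uniform translations $y_1=\dots=y_N=\text{const}$, i.e. perturbations that leave all spacings unchanged. *)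

theory Defs
  imports "HOL-Analysis.Analysis"
begin

text \<open>Linearization of
  x_i'' = a [V((x_N - x_i)/(N-i)) - x_i']  (i < N),
  x_N'' = a [V(x_1 + L - x_N) - x_N']
about the uniform flow e_i(t) = h i + V(h) t, h = L/N, where all headway arguments
equal h.  With Vp = V'(h), the perturbations y_i = x_i - e_i satisfy
  y_i'' = a [Vp (y_N - y_i)/(N-i) - y_i']  (i < N),
  y_N'' = a [Vp (y_1 - y_N) - y_N'].\<close>

definition lin_rhs :: "real \<Rightarrow> real \<Rightarrow> nat \<Rightarrow> (nat \<Rightarrow> complex) \<Rightarrow> (nat \<Rightarrow> complex) \<Rightarrow> nat \<Rightarrow> complex" where
  "lin_rhs a Vp N y v i =
     (if i < N then complex_of_real a * (complex_of_real Vp * (y N - y i) / complex_of_real (real N - real i) - v i)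
      else complex_of_real a * (complex_of_real Vp * (y 1 - y N) - v N))"

text \<open>lambda is a characteristic root iff y_i(t) = xi_i e^{lambda t}, xi nonzero, solves the
linearized system, i.e. lambda^2 xi_i = rhs(xi, lambda xi)_i for i = 1..N.\<close>

definition char_root :: "real \<Rightarrow> real \<Rightarrow> nat \<Rightarrow> complex \<Rightarrow> bool" where
  "char_root a Vp N lam \<longleftrightarrow>
     (\<exists>\<xi> :: nat \<Rightarrow> complex. (\<exists>i\<in>{1..N}. \<xi> i \<noteq> 0) \<and>
        (\<forall>i\<in>{1..N}. lam\<^sup>2 * \<xi> i = lin_rhs a Vp N \<xi> (\<lambda>i. lam * \<xi> i) i))"

definition linearly_stable :: "real \<Rightarrow> real \<Rightarrow> nat \<Rightarrow> bool" where
  "linearly_stable a Vp N \<longleftrightarrow> (\<forall>lam. char_root a Vp N lam \<longrightarrow> lam = 0 \<or> Re lam < 0)"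

end

theory Submission
  imports Defs
begin

text \<open>With \<open>y\<^sub>i = \<xi>\<^sub>i e\<^sup>\<lambda>\<^sup>t\<close> and \<open>c = a V'(h)\<close>, follower \<open>i\<close> obeys
  \<open>(\<lambda>\<^sup>2 + a\<lambda> + c/(N-i)) \<xi>\<^sub>i = c/(N-i) \<xi>\<^sub>N\<close> and the leader \<open>(\<lambda>\<^sup>2 + a\<lambda> + c) \<xi>\<^sub>N = c \<xi>\<^sub>1\<close>.
  A quadratic \<open>\<lambda>\<^sup>2 + a\<lambda> + c'\<close> with \<open>a, c' > 0\<close> has its roots in the open left half-plane.
  So if \<open>Re \<lambda> \<ge> 0\<close>, the follower equations force \<open>\<xi>\<^sub>N \<noteq> 0\<close>, and eliminating \<open>\<xi>\<^sub>1\<close>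
  between vehicle 1 and the leader leaves \<open>w (w + c N/(N-1)) = 0\<close> with \<open>w = \<lambda>\<^sup>2 + a\<lambda>\<close>:
  either \<open>\<lambda> \<in> {0, -a}\<close> or \<open>\<lambda>\<close> is again a root of such a quadratic.\<close>

lemma quadratic_root_Re_neg:
  fixes z :: complex and a c :: real
  assumes "z\<^sup>2 + of_real a * z + of_real c = 0" and "a > 0" and "c > 0"
  shows "Re z < 0"
proof -
  have re: "Re z ^ 2 - Im z ^ 2 + a * Re z + c = 0"
    and im: "Im z * (2 * Re z + a) = 0"
    using assms(1) by (simp_all add: complex_eq_iff power2_eq_square algebra_simps)
  show ?thesis
  proof (cases "Im z = 0")
    case True
    with re have "Re z * (Re z + a) = - c"
      by (simp add: power2_eq_square algebra_simps)
    with assms(2,3) show ?thesis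
      by (smt (verit) mult_nonneg_nonneg)
  next
    case False
    with im assms(2) show ?thesis by simp
  qed
qed

lemma follower_mode_eq:
  assumes "i < N" and "lam\<^sup>2 * \<xi> i = lin_rhs a Vp N \<xi> (\<lambda>i. lam * \<xi> i) i"
  defines "c \<equiv> complex_of_real (a * Vp / (real N - real i))"
  shows "(lam\<^sup>2 + of_real a * lam + c) * \<xi> i = c * \<xi> N"
  using assms by (simp add: lin_rhs_def c_def field_simps)

lemma leader_mode_eq:
  assumes "lam\<^sup>2 * \<xi> N = lin_rhs a Vp N \<xi> (\<lambda>i. lam * \<xi> i) N"
  shows "(lam\<^sup>2 + of_real a * lam + of_real (a * Vp)) * \<xi> N = of_real (a * Vp) * \<xi> 1"
  using assms by (simp add: lin_rhs_def algebra_simps)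

lemma leader_mode_nonzero:
  assumes "a > 0" and "Vp > 0" and "Re lam \<ge> 0"
    and nonzero: "\<exists>i\<in>{1..N}. \<xi> i \<noteq> 0"
    and modes: "\<forall>i\<in>{1..N}. lam\<^sup>2 * \<xi> i = lin_rhs a Vp N \<xi> (\<lambda>i. lam * \<xi> i) i"
  shows "\<xi> N \<noteq> 0"
proof
  assume leader: "\<xi> N = 0"
  have "\<xi> i = 0" if i: "i \<in> {1..N}" "i < N" for i
  proof -
    have pos: "a * Vp / (real N - real i) > 0"
      using assms(1,2) \<open>i < N\<close> by simp
    have "(lam\<^sup>2 + of_real a * lam + of_real (a * Vp / (real N - real i))) * \<xi> i = 0"
      using follower_mode_eq[OF \<open>i < N\<close>] modes i leader by simp
    moreover have "lam\<^sup>2 + of_real a * lam + of_real (a * Vp / (real N - real i)) \<noteq> 0"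
      using quadratic_root_Re_neg[OF _ \<open>a > 0\<close> pos] \<open>Re lam \<ge> 0\<close> by force
    ultimately show ?thesis by simp
  qed
  with leader nonzero show False
    by (metis atLeastAtMost_iff nat_less_le)
qed

lemma two_mode_dispersion:
  fixes w c m x y :: "'a :: field"
  assumes "(w + c / m) * x = c / m * y" and "(w + c) * y = c * x"
    and "y \<noteq> 0" and "m \<noteq> 0"
  shows "w * (w + c * (m + 1) / m) = 0"
proof -
  have "(w + c / m) * (w + c) * y = (c / m) * c * y"
    using assms(1,2) by (metis mult.assoc mult.commute)
  then have "(w * (w + c * (m + 1) / m)) * y = 0"
    using \<open>m \<noteq> 0\<close> by (simp add: field_simps)
  with \<open>y \<noteq> 0\<close> show ?thesis by simp
qed

lemma char_root_dispersion:
  assumes "N \<ge> 2" and "a > 0" and "Vp > 0" and "Re lam \<ge> 0" and "char_root a Vp N lam"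
  shows "(lam\<^sup>2 + of_real a * lam) * (lam\<^sup>2 + of_real a * lam + of_real (a * Vp * N / (real N - 1))) = 0"
proof -
  obtain \<xi> where nonzero: "\<exists>i\<in>{1..N}. \<xi> i \<noteq> 0"
    and modes: "\<forall>i\<in>{1..N}. lam\<^sup>2 * \<xi> i = lin_rhs a Vp N \<xi> (\<lambda>i. lam * \<xi> i) i"
    using \<open>char_root a Vp N lam\<close> unfolding char_root_def by blast
  define m where "m = real N - 1"
  define w where "w = lam\<^sup>2 + of_real a * lam"
  define c where "c = complex_of_real (a * Vp)"
  have "m \<ge> 1" using \<open>N \<ge> 2\<close> by (simp add: m_def)
  have follower: "(w + c / of_real m) * \<xi> 1 = c / of_real m * \<xi> N"
    using follower_mode_eq[of 1 N] modes \<open>N \<ge> 2\<close> by (simp add: w_def c_def m_def)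
  have leader: "(w + c) * \<xi> N = c * \<xi> 1"
    using leader_mode_eq modes \<open>N \<ge> 2\<close> by (simp add: w_def c_def)
  have "w * (w + c * (of_real m + 1) / of_real m) = 0"
    using two_mode_dispersion[OF follower leader] \<open>m \<ge> 1\<close>
      leader_mode_nonzero[OF \<open>a > 0\<close> \<open>Vp > 0\<close> \<open>Re lam \<ge> 0\<close> nonzero modes]
    by simp
  then show ?thesis
    using \<open>N \<ge> 2\<close> by (simp add: w_def c_def m_def)
qed

theorem theorem3p2:
  fixes N :: nat and L a :: real and V :: "real \<Rightarrow> real" and Vp :: real
  assumes "N \<ge> 2" and "L > 0" and "a > 0"
    and "(V has_real_derivative Vp) (at (L / real N))" and "Vp > 0"
  shows "linearly_stable a Vp N"
  unfolding linearly_stable_def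
proof (intro allI impI)
  fix lam assume root: "char_root a Vp N lam"
  show "lam = 0 \<or> Re lam < 0"
  proof (rule ccontr)
    assume "\<not> (lam = 0 \<or> Re lam < 0)"
    then have "lam \<noteq> 0" and "Re lam \<ge> 0" by auto
    have "lam + of_real a \<noteq> 0"
      using \<open>Re lam \<ge> 0\<close> \<open>a > 0\<close> by (auto simp: complex_eq_iff)
    moreover have "lam\<^sup>2 + of_real a * lam = lam * (lam + of_real a)"
      by (simp add: power2_eq_square algebra_simps)
    ultimately have "lam\<^sup>2 + of_real a * lam \<noteq> 0"
      using \<open>lam \<noteq> 0\<close> by simp
    then have "lam\<^sup>2 + of_real a * lam + of_real (a * Vp * N / (real N - 1)) = 0"
      using char_root_dispersion[OF assms(1,3,5) \<open>Re lam \<ge> 0\<close> root] by simp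
    moreover have "a * Vp * N / (real N - 1) > 0"
      using \<open>N \<ge> 2\<close> \<open>a > 0\<close> \<open>Vp > 0\<close> by simp
    ultimately have "Re lam < 0"
      using quadratic_root_Re_neg \<open>a > 0\<close> by blast
    with \<open>Re lam \<ge> 0\<close> show False by simp
  qed
qed

end
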